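(* Let $0<\nu<1$ and $0\le\mu<1$. Then for all $t>0$, $$t\,f_{\nu,\mu-1}(t)=(\mu-1)\,f_{\nu,\mu}(t)+\nu\, f_{\nu,\mu-\nu}(t),$$ and, since $\frac{d}{dt}f_{\nu,\mu}(t)=f_{\nu,\mu-1}(t)$, $$t\,\frac{d f_{\nu,\mu}(t)}{dt}=(\mu-1)\,f_{\nu,\mu}(t)+\nu\, f_{\nu,\mu-\nu}(t).$$
   Context: For $0<\nu<1$ and real $\rho$, $f_{\nu,\rho}$ denotes the inverse Laplace transform of $s^{-\rho}e^{-s^{\nu}}$: $f_{\nu,\rho}(t)=\frac{1}{2\pi i}\int_{c-i\infty}^{c+i\infty}e^{st}s^{-\rho}e^{-s^{\nu}}\,ds$, $t>0$, $c>0$, principal branches (absolutely convergent for every real $\rho$). *)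

theory Defs
  imports "HOL-Analysis.Analysis"
begin

text \<open>Bromwich-integral definition of f_{nu,rho}(t): the inverse Laplace transform of
  s^(-rho) exp(-s^nu), along the vertical line Re s = c with c = 1 (the value does not depend
  on c > 0). Parametrising s = c + i y gives ds = i dy, so the factor 1/(2 pi i) becomes 1/(2 pi).\<close>

definition bromwich_f :: "real \<Rightarrow> real \<Rightarrow> real \<Rightarrow> complex" where
  "bromwich_f nu rho t =
     (1 / (2 * pi)) *\<^sub>R integral UNIV (\<lambda>y::real.
        let s = Complex 1 y in
        exp (s * of_real t) * s powr (- of_real rho) * exp (- (s powr of_real nu)))"

end

(* On the line s = 1 + i y the integrand K_rho(t, y) = e^(s t) s^(-rho) e^(-s^nu) decays faster
   than any power of |s|, because Re s^nu >= cos (nu pi / 2) |s|^nu with cos (nu pi / 2) > 0.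
   So it is integrable, and its y-derivative i (t K_rho - rho K_(rho+1) - nu K_(rho+1-nu)) integrates
   to zero since K_rho vanishes at both ends of the line; at rho = mu - 1 this is the recurrence.
   Differentiating in t multiplies the integrand by s, i.e. lowers rho by one, and the same decay
   bound makes differentiation under the integral sign legitimate. *)

theory Submission
  imports Defs "HOL-Probability.Sinc_Integral" "HOL-Real_Asymp.Real_Asymp"
begin

lemma has_vector_derivative_at_iff_difference_quotient:
  fixes f :: "real \<Rightarrow> 'a::real_normed_vector"
  shows "(f has_vector_derivative D) (at x) \<longleftrightarrow> ((\<lambda>h. (f (x + h) - f x) /\<^sub>R h) \<longlongrightarrow> D) (at 0)"
proof -
  have "norm (f (x + h) - f x - h *\<^sub>R D) / norm h = norm ((f (x + h) - f x) /\<^sub>R h - D)"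
    if "h \<noteq> 0" for h
  proof -
    have "(f (x + h) - f x) /\<^sub>R h - D = (f (x + h) - f x - h *\<^sub>R D) /\<^sub>R h"
      using that by (simp add: algebra_simps)
    then show ?thesis by (simp add: divide_inverse_commute)
  qed
  then have "((\<lambda>h. norm (f (x + h) - f x - h *\<^sub>R D) / norm h) \<longlongrightarrow> 0) (at 0) \<longleftrightarrow>
      ((\<lambda>h. norm ((f (x + h) - f x) /\<^sub>R h - D)) \<longlongrightarrow> 0) (at 0)"
    by (intro tendsto_cong) (auto simp: eventually_at_filter)
  then show ?thesis
    by (simp add: has_vector_derivative_def has_derivative_at bounded_linear_scaleR_left
        tendsto_norm_zero_iff LIM_zero_iff)
qed

lemma norm_difference_le_of_vector_derivative_bound:
  fixes f :: "real \<Rightarrow> 'a::real_normed_vector"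
  assumes "convex S" "a \<in> S" "b \<in> S"
    and "\<And>x. x \<in> S \<Longrightarrow> (f has_vector_derivative f' x) (at x)"
    and "\<And>x. x \<in> S \<Longrightarrow> norm (f' x) \<le> B"
  shows "norm (f b - f a) \<le> B * \<bar>b - a\<bar>"
proof -
  have "norm (f b - f a) \<le> B * norm (b - a)"
  proof (rule differentiable_bound[where f' = "\<lambda>x d. d *\<^sub>R f' x"])
    show "(f has_derivative (\<lambda>d. d *\<^sub>R f' x)) (at x within S)" if "x \<in> S" for x
      using assms(4)[OF that] by (simp add: has_vector_derivative_def has_derivative_at_withinI)
    show "onorm (\<lambda>d. d *\<^sub>R f' x) \<le> B" if "x \<in> S" for x
      using assms(5)[OF that] by (intro onorm_le) (auto simp: mult.commute[of B] intro!: mult_left_mono)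
  qed (use assms in auto)
  then show ?thesis by simp
qed

lemma has_vector_derivative_integral:
  fixes f f' :: "real \<Rightarrow> 'a \<Rightarrow> 'b::{banach, second_countable_topology}"
  assumes "0 < \<delta>"
    and integrable: "\<And>x. x \<in> ball t \<delta> \<Longrightarrow> integrable M (f x)"
    and measurable': "f' t \<in> borel_measurable M"
    and deriv: "\<And>x y. x \<in> ball t \<delta> \<Longrightarrow> y \<in> space M \<Longrightarrow> ((\<lambda>x. f x y) has_vector_derivative f' x y) (at x)"
    and bound: "\<And>x y. x \<in> ball t \<delta> \<Longrightarrow> y \<in> space M \<Longrightarrow> norm (f' x y) \<le> w y"
    and "integrable M w"
  shows "((\<lambda>x. integral\<^sup>L M (f x)) has_vector_derivative integral\<^sup>L M (f' t)) (at t)"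
proof -
  define Q where "Q h = (\<lambda>y. (f (t + h) y - f t y) /\<^sub>R h)" for h
  have t_in_ball: "t \<in> ball t \<delta>"
    using \<open>0 < \<delta>\<close> by simp
  have t_plus: "t + h \<in> ball t \<delta>" if "h \<in> ball 0 \<delta>" for h
    using that by (simp add: dist_norm)
  have integral_Q: "integral\<^sup>L M (Q h) = (integral\<^sup>L M (f (t + h)) - integral\<^sup>L M (f t)) /\<^sub>R h"
    if "h \<in> ball 0 \<delta>" for h
    using integrable[OF t_plus[OF that]] integrable[OF t_in_ball] by (simp add: Q_def integral_diff)
  have integrable_Q: "integrable M (Q h)" if "h \<in> ball 0 \<delta>" for h
    unfolding Q_def using integrable[OF t_plus[OF that]] integrable[OF t_in_ball] by auto
  have Q_lim: "((\<lambda>h. Q h y) \<longlongrightarrow> f' t y) (at 0)" if "y \<in> space M" for y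
    using deriv[OF t_in_ball that] by (simp add: Q_def has_vector_derivative_at_iff_difference_quotient)
  have Q_bound: "norm (Q h y) \<le> w y" if "h \<in> ball 0 \<delta> - {0}" "y \<in> space M" for h y
  proof -
    have "norm (f (t + h) y - f t y) \<le> w y * \<bar>(t + h) - t\<bar>"
      using t_in_ball t_plus that deriv bound
      by (intro norm_difference_le_of_vector_derivative_bound[where S = "ball t \<delta>"]) auto
    then show ?thesis
      using that(1) by (simp add: Q_def divide_simps mult.commute)
  qed
  \<comment> \<open>By the mean value bound the difference quotients are dominated by w, so dominated
    convergence applies along every sequence tending to 0.\<close>
  have "((\<lambda>h. integral\<^sup>L M (Q h)) \<longlongrightarrow> integral\<^sup>L M (f' t)) (at 0 within ball 0 \<delta>)"
  proof (subst tendsto_at_iff_sequentially, intro allI impI)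
    fix X :: "nat \<Rightarrow> real"
    assume X: "\<forall>i. X i \<in> ball 0 \<delta> - {0}" and "X \<longlonglongrightarrow> 0"
    then have "filterlim X (at 0) sequentially"
      by (intro filterlim_atI) auto
    have "Q (X i) \<in> borel_measurable M" for i
      using X by (intro borel_measurable_integrable integrable_Q) auto
    moreover have "AE y in M. (\<lambda>i. Q (X i) y) \<longlonglongrightarrow> f' t y"
      by (intro AE_I2 filterlim_compose[OF Q_lim \<open>filterlim X (at 0) sequentially\<close>])
    moreover have "AE y in M. norm (Q (X i) y) \<le> w y" for i
      using X by (intro AE_I2 Q_bound) auto
    ultimately have "(\<lambda>i. integral\<^sup>L M (Q (X i))) \<longlonglongrightarrow> integral\<^sup>L M (f' t)"
      using measurable' \<open>integrable M w\<close> by (intro integral_dominated_convergence)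
    then show "((\<lambda>h. integral\<^sup>L M (Q h)) \<circ> X) \<longlonglongrightarrow> integral\<^sup>L M (f' t)"
      by (simp add: o_def)
  qed
  moreover have "\<forall>\<^sub>F h in at 0 within ball 0 \<delta>.
      integral\<^sup>L M (Q h) = (integral\<^sup>L M (f (t + h)) - integral\<^sup>L M (f t)) /\<^sub>R h"
    unfolding eventually_at_filter using integral_Q by (intro always_eventually) blast
  ultimately have "((\<lambda>h. (integral\<^sup>L M (f (t + h)) - integral\<^sup>L M (f t)) /\<^sub>R h) \<longlongrightarrow> integral\<^sup>L M (f' t))
      (at 0 within ball 0 \<delta>)"
    by (rule Lim_transform_eventually)
  moreover have "at 0 within ball 0 \<delta> = at (0::real)"
    using \<open>0 < \<delta>\<close> by (intro at_within_open) auto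
  ultimately show ?thesis
    unfolding has_vector_derivative_at_iff_difference_quotient by simp
qed

lemma power_div_fact_le_exp:
  fixes x :: real
  assumes "0 \<le> x"
  shows "x ^ n / fact n \<le> exp x"
proof -
  have "(\<Sum>k\<in>{n}. x ^ k /\<^sub>R fact k) \<le> (\<Sum>k. x ^ k /\<^sub>R fact k)"
    using assms summable_exp by (intro sum_le_suminf) auto
  then show ?thesis
    by (simp add: exp_def divide_inverse_commute)
qed

lemma cos_mult_norm_powr_le_Re_powr:
  fixes z :: complex and nu :: real
  assumes "0 < Re z" "0 \<le> nu" "nu \<le> 2"
  shows "cos (nu * pi / 2) * norm z powr nu \<le> Re (z powr of_real nu)"
proof -
  have "z \<noteq> 0" using assms(1) by auto
  have "\<bar>Im (Ln z)\<bar> < pi / 2"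
    using assms(1) by (rule Re_Ln_pos_lt_imp)
  then have "\<bar>nu * Im (Ln z)\<bar> \<le> nu * (pi / 2)"
    using assms(2) unfolding abs_mult by (intro mult_mono) auto
  moreover have "nu * pi / 2 \<le> pi"
    using assms(3) by (simp add: field_simps)
  ultimately have "cos (nu * pi / 2) \<le> cos (nu * Im (Ln z))"
    using cos_monotone_0_pi_le[of "\<bar>nu * Im (Ln z)\<bar>" "nu * pi / 2"] by simp
  moreover have "Re (z powr of_real nu) = norm z powr nu * cos (nu * Im (Ln z))"
    using \<open>z \<noteq> 0\<close> by (simp add: powr_def Re_exp exp_Ln norm_exp_eq_Re)
  ultimately show ?thesis
    by (simp add: mult.commute mult_left_mono)
qed

lemma norm_powr_mult_exp_powr_decay:
  fixes nu rho p :: real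
  assumes "0 < nu" "nu < 1"
  obtains B where "\<And>z. 0 < Re z \<Longrightarrow> 1 \<le> norm z \<Longrightarrow>
    norm (z powr (- of_real rho) * exp (- (z powr of_real nu))) \<le> B * norm z powr (- p)"
proof -
  define k where "k = cos (nu * pi / 2)"
  have "0 < nu * pi" "nu * pi < pi"
    using assms by auto
  then have "0 < k"
    unfolding k_def using pi_gt_zero by (intro cos_gt_zero_pi) linarith+
  define n where "n = nat \<lceil>(p - rho) / nu\<rceil>"
  have "(p - rho) / nu \<le> real n"
    unfolding n_def by linarith
  then have n: "- rho - nu * n \<le> - p"
    using assms(1) by (simp add: field_simps)
  define B where "B = fact n / k ^ n"
  have "norm (z powr (- of_real rho) * exp (- (z powr of_real nu))) \<le> B * norm z powr (- p)"
    if z: "0 < Re z" "1 \<le> norm z" for z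
  proof -
    define r where "r = norm z"
    have "1 \<le> r"
      using z(2) by (simp add: r_def)
    have "k * r powr nu \<le> Re (z powr of_real nu)"
      unfolding k_def r_def using z assms by (intro cos_mult_norm_powr_le_Re_powr) auto
    then have "norm (exp (- (z powr of_real nu))) \<le> exp (- (k * r powr nu))"
      by simp
    also have "\<dots> \<le> fact n / (k * r powr nu) ^ n"
      using power_div_fact_le_exp[of "k * r powr nu" n] \<open>0 < k\<close> \<open>1 \<le> r\<close>
      by (simp add: exp_minus field_simps)
    also have "\<dots> = B * r powr (- (nu * n))"
      using \<open>1 \<le> r\<close> by (simp add: B_def power_mult_distrib powr_realpow[symmetric] powr_powr
          powr_minus field_simps)
    finally have "norm (exp (- (z powr of_real nu))) \<le> B * r powr (- (nu * n))" .
    moreover have "norm (z powr (- of_real rho)) = r powr (- rho)"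
      by (simp add: r_def norm_powr_real_powr')
    ultimately have "norm (z powr (- of_real rho) * exp (- (z powr of_real nu)))
        \<le> r powr (- rho) * (B * r powr (- (nu * n)))"
      unfolding norm_mult by (simp add: mult_left_mono)
    also have "\<dots> = B * r powr (- rho - nu * n)"
      by (simp add: powr_add[symmetric])
    also have "\<dots> \<le> B * r powr (- p)"
      using \<open>0 < k\<close> \<open>1 \<le> r\<close> n by (intro mult_left_mono powr_mono) (auto simp: B_def)
    finally show ?thesis
      by (simp add: r_def)
  qed
  then show ?thesis using that by blast
qed

definition bromwich_kernel :: "real \<Rightarrow> real \<Rightarrow> real \<Rightarrow> real \<Rightarrow> complex" where
  "bromwich_kernel nu rho t y =
     exp (Complex 1 y * of_real t) * Complex 1 y powr (- of_real rho) * exp (- (Complex 1 y powr of_real nu))"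

lemma norm_bromwich_kernel_le:
  fixes nu rho :: real
  assumes "0 < nu" "nu < 1"
  obtains B where "\<And>t y. norm (bromwich_kernel nu rho t y) \<le> B * exp t / (1 + y\<^sup>2)"
proof -
  obtain B where B: "\<And>z. 0 < Re z \<Longrightarrow> 1 \<le> norm z \<Longrightarrow>
      norm (z powr (- of_real rho) * exp (- (z powr of_real nu))) \<le> B * norm z powr (- 2)"
    using norm_powr_mult_exp_powr_decay[OF assms] by blast
  have "norm (bromwich_kernel nu rho t y) \<le> B * exp t / (1 + y\<^sup>2)" for t y
  proof -
    have "norm (Complex 1 y) powr (- 2) = 1 / (1 + y\<^sup>2)"
      by (simp add: powr_minus powr_realpow cmod_power2 divide_inverse)
    moreover have "1 \<le> norm (Complex 1 y)"
      by (simp add: norm_complex_def)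
    ultimately have "norm (Complex 1 y powr (- of_real rho) * exp (- (Complex 1 y powr of_real nu)))
        \<le> B / (1 + y\<^sup>2)"
      using B[of "Complex 1 y"] by simp
    then show ?thesis
      unfolding bromwich_kernel_def mult.assoc norm_mult[of "exp _"]
      by (simp add: norm_exp_eq_Re mult_left_mono divide_inverse mult.assoc)
  qed
  then show ?thesis using that by blast
qed

lemma continuous_on_bromwich_kernel: "continuous_on UNIV (bromwich_kernel nu rho t)"
proof -
  have "continuous_on UNIV (\<lambda>y. Complex 1 y)"
    by (simp add: Complex_eq continuous_intros)
  moreover have "Complex 1 y \<notin> \<real>\<^sub>\<le>\<^sub>0" for y
    by (simp add: complex_nonpos_Reals_iff)
  ultimately show ?thesis
    unfolding bromwich_kernel_def[abs_def]
    by (intro continuous_intros) (auto simp: complex_eq_iff)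
qed

lemma integrable_const_divide_1_plus_square: "integrable lborel (\<lambda>y::real. c / (1 + y\<^sup>2))"
  using integrable_mult_right[OF integrable_inverse_1_plus_square[unfolded set_integrable_def], of c]
  by (simp add: einterval_eq_UNIV divide_inverse)

lemma integrable_bromwich_kernel:
  assumes "0 < nu" "nu < 1"
  shows "integrable lborel (bromwich_kernel nu rho t)"
proof -
  obtain B where B: "\<And>t y. norm (bromwich_kernel nu rho t y) \<le> B * exp t / (1 + y\<^sup>2)"
    using norm_bromwich_kernel_le[OF assms] by blast
  show ?thesis
  proof (rule Bochner_Integration.integrable_bound)
    show "integrable lborel (\<lambda>y. B * exp t / (1 + y\<^sup>2))"
      by (rule integrable_const_divide_1_plus_square)
    show "bromwich_kernel nu rho t \<in> borel_measurable lborel"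
      using continuous_on_bromwich_kernel by (simp add: borel_measurable_continuous_onI)
    show "AE y in lborel. norm (bromwich_kernel nu rho t y) \<le> norm (B * exp t / (1 + y\<^sup>2))"
      by (intro AE_I2 order_trans[OF B]) (simp add: divide_right_mono)
  qed
qed

lemma bromwich_f_eq_lebesgue_integral:
  assumes "0 < nu" "nu < 1"
  shows "bromwich_f nu rho t = (1 / (2 * pi)) *\<^sub>R integral\<^sup>L lborel (bromwich_kernel nu rho t)"
proof -
  have "integral UNIV (bromwich_kernel nu rho t) = integral\<^sup>L lborel (bromwich_kernel nu rho t)"
    using integrable_bromwich_kernel[OF assms] by (intro integral_unique has_integral_integral_lborel)
  then show ?thesis
    by (simp add: bromwich_f_def bromwich_kernel_def[abs_def] Let_def)
qed

lemma bromwich_kernel_has_vector_derivative_in_y: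
  "((\<lambda>y. bromwich_kernel nu rho t y) has_vector_derivative
     \<i> * (of_real t * bromwich_kernel nu rho t y - of_real rho * bromwich_kernel nu (rho + 1) t y
          - of_real nu * bromwich_kernel nu (rho + 1 - nu) t y)) (at y)"
proof -
  define G where "G s = exp (s * of_real t) * s powr (- of_real rho) * exp (- (s powr of_real nu))"
    for s :: complex
  define s where "s = Complex 1 y"
  define G' where "G' =
      of_real t * G s
      - of_real rho * exp (s * of_real t) * s powr (- of_real rho - 1) * exp (- (s powr of_real nu))
      - of_real nu * exp (s * of_real t) * (s powr (- of_real rho) * s powr (of_real nu - 1))
          * exp (- (s powr of_real nu))"
  have "s \<notin> \<real>\<^sub>\<le>\<^sub>0"
    by (simp add: s_def complex_nonpos_Reals_iff)
  then have dG: "(G has_field_derivative G') (at (Complex 1 y))"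
    unfolding G_def G'_def s_def by (auto intro!: derivative_eq_intros simp: algebra_simps)
  have "((\<lambda>y. Complex 1 y) has_vector_derivative \<i>) (at y)"
    unfolding Complex_eq by (auto intro!: derivative_eq_intros)
  from field_vector_diff_chain_at[OF this dG]
  have "((\<lambda>y. G (Complex 1 y)) has_vector_derivative \<i> * G') (at y)"
    by (simp add: o_def)
  moreover have "s powr (- of_real rho - 1) = s powr (- of_real (rho + 1))"
    by simp
  moreover have "s powr (- of_real rho) * s powr (of_real nu - 1) = s powr (- of_real (rho + 1 - nu))"
    by (simp add: powr_add[symmetric] algebra_simps)
  ultimately show ?thesis
    by (simp add: bromwich_kernel_def G_def G'_def s_def[symmetric] algebra_simps)
qed

lemma tendsto_bromwich_kernel:
  assumes "0 < nu" "nu < 1"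
  shows "(bromwich_kernel nu rho t \<longlongrightarrow> 0) at_top" and "(bromwich_kernel nu rho t \<longlongrightarrow> 0) at_bot"
proof -
  obtain B where B: "\<And>t y. norm (bromwich_kernel nu rho t y) \<le> B * exp t / (1 + y\<^sup>2)"
    using norm_bromwich_kernel_le[OF assms] by blast
  then have bound: "\<forall>\<^sub>F y in F. norm (bromwich_kernel nu rho t y) \<le> B * exp t / (1 + y\<^sup>2)" for F
    by simp
  have "((\<lambda>y::real. B * exp t / (1 + y\<^sup>2)) \<longlongrightarrow> 0) at_top"
    by real_asymp
  with bound show "(bromwich_kernel nu rho t \<longlongrightarrow> 0) at_top"
    by (rule Lim_null_comparison)
  have "((\<lambda>y::real. B * exp t / (1 + y\<^sup>2)) \<longlongrightarrow> 0) at_bot"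
    by real_asymp
  with bound show "(bromwich_kernel nu rho t \<longlongrightarrow> 0) at_bot"
    by (rule Lim_null_comparison)
qed

lemma integral_bromwich_kernel_recurrence:
  assumes "0 < nu" "nu < 1"
  shows "of_real t * integral\<^sup>L lborel (bromwich_kernel nu rho t)
    = of_real rho * integral\<^sup>L lborel (bromwich_kernel nu (rho + 1) t)
      + of_real nu * integral\<^sup>L lborel (bromwich_kernel nu (rho + 1 - nu) t)"
proof -
  define K' where "K' y = \<i> * (of_real t * bromwich_kernel nu rho t y
      - of_real rho * bromwich_kernel nu (rho + 1) t y
      - of_real nu * bromwich_kernel nu (rho + 1 - nu) t y)" for y
  note integrable = integrable_bromwich_kernel[OF assms]
  have "integrable lborel K'"
    unfolding K'_def by (auto intro!: integrable_mult_right integrable_diff integrable)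
  have "(LBINT y=-\<infinity>..\<infinity>. K' y) = 0 - 0"
  proof (rule interval_integral_FTC_integrable[where F = "bromwich_kernel nu rho t"])
    show "(bromwich_kernel nu rho t has_vector_derivative K' y) (at y)" for y
      unfolding K'_def by (rule bromwich_kernel_has_vector_derivative_in_y)
    have "isCont (bromwich_kernel nu r t) y" for r y
      using continuous_on_bromwich_kernel continuous_on_eq_continuous_at open_UNIV by blast
    then show "isCont K' y" for y
      unfolding K'_def by (intro continuous_intros)
    show "set_integrable lborel (einterval (- \<infinity>) \<infinity>) K'"
      using \<open>integrable lborel K'\<close> by (simp add: einterval_eq_UNIV set_integrable_def)
    show "((bromwich_kernel nu rho t \<circ> real_of_ereal) \<longlongrightarrow> 0) (at_right (- \<infinity>))"
      unfolding ereal_tendsto_simps1 by (rule tendsto_bromwich_kernel[OF assms])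
    show "((bromwich_kernel nu rho t \<circ> real_of_ereal) \<longlongrightarrow> 0) (at_left \<infinity>)"
      unfolding ereal_tendsto_simps1 by (rule tendsto_bromwich_kernel[OF assms])
  qed simp
  then have "integral\<^sup>L lborel K' = 0"
    by (simp add: interval_lebesgue_integral_def einterval_eq_UNIV set_lebesgue_integral_def)
  moreover have "integral\<^sup>L lborel K' = \<i> * (of_real t * integral\<^sup>L lborel (bromwich_kernel nu rho t)
      - of_real rho * integral\<^sup>L lborel (bromwich_kernel nu (rho + 1) t)
      - of_real nu * integral\<^sup>L lborel (bromwich_kernel nu (rho + 1 - nu) t))"
    unfolding K'_def using integrable
    by (simp add: integral_mult_right_zero integral_diff integrable_mult_right integrable_diff)
  ultimately have "of_real t * integral\<^sup>L lborel (bromwich_kernel nu rho t)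
      - of_real rho * integral\<^sup>L lborel (bromwich_kernel nu (rho + 1) t)
      - of_real nu * integral\<^sup>L lborel (bromwich_kernel nu (rho + 1 - nu) t) = 0"
    by simp
  then show ?thesis
    by (simp only: diff_diff_eq right_minus_eq)
qed

lemma bromwich_kernel_has_vector_derivative_in_t:
  "((\<lambda>t. bromwich_kernel nu rho t y) has_vector_derivative bromwich_kernel nu (rho - 1) t y) (at t)"
proof -
  define s where "s = Complex 1 y"
  define C where "C = s powr (- of_real rho) * exp (- (s powr of_real nu))"
  have "((\<lambda>z. exp (s * z) * C) has_field_derivative s * exp (s * of_real t) * C) (at (of_real t))"
    by (auto intro!: derivative_eq_intros)
  then have "((\<lambda>x. exp (s * of_real x) * C) has_vector_derivative s * exp (s * of_real t) * C) (at t)"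
    by (rule has_vector_derivative_real_field)
  moreover have "s powr (- of_real (rho - 1)) = s * s powr (- of_real rho)"
    using powr_add[of s 1 "- of_real rho"] by (simp add: s_def)
  ultimately show ?thesis
    by (simp add: bromwich_kernel_def C_def s_def[symmetric] mult.assoc mult.left_commute)
qed

lemma bromwich_f_recurrence:
  assumes "0 < nu" "nu < 1"
  shows "of_real t * bromwich_f nu (rho - 1) t
    = of_real (rho - 1) * bromwich_f nu rho t + of_real nu * bromwich_f nu (rho - nu) t"
proof -
  have "of_real t * integral\<^sup>L lborel (bromwich_kernel nu (rho - 1) t)
    = of_real (rho - 1) * integral\<^sup>L lborel (bromwich_kernel nu rho t)
      + of_real nu * integral\<^sup>L lborel (bromwich_kernel nu (rho - nu) t)"
    using integral_bromwich_kernel_recurrence[OF assms, of t "rho - 1"] by simp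
  then have "(1 / (2 * pi)) *\<^sub>R (of_real t * integral\<^sup>L lborel (bromwich_kernel nu (rho - 1) t))
    = (1 / (2 * pi)) *\<^sub>R (of_real (rho - 1) * integral\<^sup>L lborel (bromwich_kernel nu rho t)
      + of_real nu * integral\<^sup>L lborel (bromwich_kernel nu (rho - nu) t))"
    by (rule arg_cong)
  then show ?thesis
    unfolding bromwich_f_eq_lebesgue_integral[OF assms] by (simp add: scaleR_add_right)
qed

lemma bromwich_f_has_vector_derivative:
  assumes "0 < nu" "nu < 1"
  shows "(bromwich_f nu rho has_vector_derivative bromwich_f nu (rho - 1) t) (at t)"
proof -
  obtain B where B: "\<And>t y. norm (bromwich_kernel nu (rho - 1) t y) \<le> B * exp t / (1 + y\<^sup>2)"
    using norm_bromwich_kernel_le[OF assms] by blast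
  have "0 \<le> B"
    using order_trans[OF norm_ge_zero B[of 0 0]] by simp
  have "((\<lambda>x. integral\<^sup>L lborel (bromwich_kernel nu rho x)) has_vector_derivative
      integral\<^sup>L lborel (bromwich_kernel nu (rho - 1) t)) (at t)"
  proof (rule has_vector_derivative_integral[where \<delta> = 1 and w = "\<lambda>y. B * exp (t + 1) / (1 + y\<^sup>2)"])
    show "integrable lborel (bromwich_kernel nu rho x)" for x
      using assms by (rule integrable_bromwich_kernel)
    show "bromwich_kernel nu (rho - 1) t \<in> borel_measurable lborel"
      using integrable_bromwich_kernel[OF assms] by (rule borel_measurable_integrable)
    show "((\<lambda>x. bromwich_kernel nu rho x y) has_vector_derivative bromwich_kernel nu (rho - 1) x y) (at x)"
      for x y by (rule bromwich_kernel_has_vector_derivative_in_t)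
    show "norm (bromwich_kernel nu (rho - 1) x y) \<le> B * exp (t + 1) / (1 + y\<^sup>2)"
      if "x \<in> ball t 1" for x y
    proof -
      have "B * exp x \<le> B * exp (t + 1)"
        using that \<open>0 \<le> B\<close> by (intro mult_left_mono) (auto simp: dist_real_def)
      then have "B * exp x / (1 + y\<^sup>2) \<le> B * exp (t + 1) / (1 + y\<^sup>2)"
        by (simp add: divide_right_mono)
      with B[of x y] show ?thesis
        by linarith
    qed
  qed (simp_all add: integrable_const_divide_1_plus_square)
  from bounded_linear.has_vector_derivative[OF bounded_linear_scaleR_right this, of "1 / (2 * pi)"]
  show ?thesis
    unfolding bromwich_f_eq_lebesgue_integral[OF assms, abs_def]
      bromwich_f_eq_lebesgue_integral[OF assms] .
qed

theorem mainTheorem4: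
  fixes nu mu t :: real
  assumes "0 < nu" "nu < 1" "0 \<le> mu" "mu < 1" "0 < t"
  shows "of_real t * bromwich_f nu (mu - 1) t
           = of_real (mu - 1) * bromwich_f nu mu t + of_real nu * bromwich_f nu (mu - nu) t
    \<and> ((\<lambda>x. bromwich_f nu mu x) has_vector_derivative bromwich_f nu (mu - 1) t) (at t)
    \<and> of_real t * vector_derivative (\<lambda>x. bromwich_f nu mu x) (at t)
           = of_real (mu - 1) * bromwich_f nu mu t + of_real nu * bromwich_f nu (mu - nu) t"
proof -
  have deriv: "(bromwich_f nu mu has_vector_derivative bromwich_f nu (mu - 1) t) (at t)"
    using assms by (intro bromwich_f_has_vector_derivative)
  then have "vector_derivative (bromwich_f nu mu) (at t) = bromwich_f nu (mu - 1) t"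
    by (rule vector_derivative_at)
  with deriv show ?thesis
    using bromwich_f_recurrence[OF assms(1,2)] by simp
qed

end
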